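(* Let $Y$ be a solid vector space, $(X,d)$ a cone metric space over $Y$, $D\subseteq X$ and $T\colon D\to X$. Suppose that for some $x_0\in D$ the Picard iteration $x_{n+1}=Tx_n$ ($n\ge0$) is well defined (i.e. $x_n\in D$ for all $n$) and converges to a point $\xi\in D$. Then each of the following conditions implies that $T\xi=\xi$: (F1) $T$ is continuous at $\xi$; (F2) $T$ has a closed graph, i.e. $\{(x,Tx):x\in D\}$ is closed in $D\times X$; (F3) for some semimonotone norm $\|\cdot\|$ on $Y$, the function $G(x)=\|d(x,Tx)\|$ is lower semicontinuous at $\xi$; (F4) there are real $\alpha,\beta\ge0$ with $d(\xi,T\xi)\preceq\alpha\,d(x,\xi)+\beta\,d(Tx,\xi)$ for each $x\in D$.
   Context: Vector space with convergence: a real vector space $Y$ with a relation $\to$ between sequences in $Y$ and points of $Y$ (uniqueness of limits not assumed) such that (C1) $x_n\to x$, $y_n\to y$ imply $x_n+y_n\to x+y$; (C2) $x_n\to x$, $\lambda\in\mathbb R$ imply $\lambda x_n\to\lambda x$; (C3) $\lambda_n\to\lambda$ in $\mathbb R$ imply $\lambda_n x\to\lambda x$. $A\subseteq Y$ is open if $x_n\to x\in A$ implies $x_n\in A$ for all but finitely many $n$; closed if $x_n\to x$, $x_n\in A$ $\forall n$ imply $x\in A$; $A^\circ$ is the union of all open subsets of $A$. A cone is a nonempty closed $K$ with $\lambda K\subseteq K$ ($\lambda\ge0$), $K+K\subseteq K$, $K\cap(-K)=\{0\}$; solid if $K\ne\{0\}$, $K^\circ\ne\emptyset$. A vector ordering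 is a partial order $\preceq$ with (V1) $x\preceq y\Rightarrow x+z\preceq y+z$; (V2) $\lambda\ge0$, $x\preceq y\Rightarrow\lambda x\preceq\lambda y$; (V3) $x_n\to x$, $y_n\to y$, $x_n\preceq y_n$ $\forall n\Rightarrow x\preceq y$. Solid vector space: positive cone $K=\{x:x\succeq0\}$ solid, with $x\prec y$ iff $y-x\in K^\circ$. A norm $\|\cdot\|$ on $Y$ is semimonotone if there is $C>0$ with $\|x\|\le C\|y\|$ whenever $0\preceq x\preceq y$. Cone metric space over $Y$: nonempty $X$ with $d\colon X\times X\to Y$, $d(x,y)\succeq0$, $d(x,y)=0$ iff $x=y$, $d(x,y)=d(y,x)$, $d(x,y)\preceq d(x,z)+d(z,y)$. $X$ carries the topology with basis $U(x,r)=\{y:d(y,x)\prec r\}$ ($r\succ0$); $x_n\to x$ iff for every $c\succ0$, $d(x_n,x)\prec c$ for all but finitely many $n$. Continuity and lower semicontinuity refer to this topology (restricted to $D$). *)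

theory Defs
  imports "HOL-Analysis.Analysis"
begin

definition vs_conv :: "((nat \<Rightarrow> 'y::real_vector) \<Rightarrow> 'y \<Rightarrow> bool) \<Rightarrow> bool" where
  "vs_conv conv \<longleftrightarrow>
     (\<forall>xs x ys y. conv xs x \<and> conv ys y \<longrightarrow> conv (\<lambda>n. xs n + ys n) (x + y)) \<and>
     (\<forall>xs x (c::real). conv xs x \<longrightarrow> conv (\<lambda>n. c *\<^sub>R xs n) (c *\<^sub>R x)) \<and>
     (\<forall>(ls::nat \<Rightarrow> real) l x. ls \<longlonglongrightarrow> l \<longrightarrow> conv (\<lambda>n. ls n *\<^sub>R x) (l *\<^sub>R x))"

definition vs_open :: "((nat \<Rightarrow> 'y) \<Rightarrow> 'y \<Rightarrow> bool) \<Rightarrow> 'y set \<Rightarrow> bool" where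
  "vs_open conv A \<longleftrightarrow> (\<forall>xs x. conv xs x \<and> x \<in> A \<longrightarrow> (\<forall>\<^sub>F n in sequentially. xs n \<in> A))"

definition vs_closed :: "((nat \<Rightarrow> 'y) \<Rightarrow> 'y \<Rightarrow> bool) \<Rightarrow> 'y set \<Rightarrow> bool" where
  "vs_closed conv A \<longleftrightarrow> (\<forall>xs x. conv xs x \<and> (\<forall>n. xs n \<in> A) \<longrightarrow> x \<in> A)"

definition vs_interior :: "((nat \<Rightarrow> 'y) \<Rightarrow> 'y \<Rightarrow> bool) \<Rightarrow> 'y set \<Rightarrow> 'y set" where
  "vs_interior conv A = \<Union>{B. B \<subseteq> A \<and> vs_open conv B}"

definition is_cone :: "((nat \<Rightarrow> 'y::real_vector) \<Rightarrow> 'y \<Rightarrow> bool) \<Rightarrow> 'y set \<Rightarrow> bool" where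
  "is_cone conv K \<longleftrightarrow> K \<noteq> {} \<and> vs_closed conv K \<and>
     (\<forall>(c::real) x. c \<ge> 0 \<and> x \<in> K \<longrightarrow> c *\<^sub>R x \<in> K) \<and>
     (\<forall>x y. x \<in> K \<and> y \<in> K \<longrightarrow> x + y \<in> K) \<and>
     K \<inter> uminus ` K = {0}"

definition solid_cone :: "((nat \<Rightarrow> 'y::real_vector) \<Rightarrow> 'y \<Rightarrow> bool) \<Rightarrow> 'y set \<Rightarrow> bool" where
  "solid_cone conv K \<longleftrightarrow> is_cone conv K \<and> K \<noteq> {0} \<and> vs_interior conv K \<noteq> {}"

definition vector_ordering ::
  "((nat \<Rightarrow> 'y::real_vector) \<Rightarrow> 'y \<Rightarrow> bool) \<Rightarrow> ('y \<Rightarrow> 'y \<Rightarrow> bool) \<Rightarrow> bool" where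
  "vector_ordering conv le \<longleftrightarrow>
     (\<forall>x. le x x) \<and> (\<forall>x y z. le x y \<and> le y z \<longrightarrow> le x z) \<and>
     (\<forall>x y. le x y \<and> le y x \<longrightarrow> x = y) \<and>
     (\<forall>x y z. le x y \<longrightarrow> le (x + z) (y + z)) \<and>
     (\<forall>(c::real) x y. c \<ge> 0 \<and> le x y \<longrightarrow> le (c *\<^sub>R x) (c *\<^sub>R y)) \<and>
     (\<forall>xs x ys y. conv xs x \<and> conv ys y \<and> (\<forall>n. le (xs n) (ys n)) \<longrightarrow> le x y)"

definition pos_cone :: "('y::real_vector \<Rightarrow> 'y \<Rightarrow> bool) \<Rightarrow> 'y set" where
  "pos_cone le = {x. le 0 x}"

definition solid_vector_space ::
  "((nat \<Rightarrow> 'y::real_vector) \<Rightarrow> 'y \<Rightarrow> bool) \<Rightarrow> ('y \<Rightarrow> 'y \<Rightarrow> bool) \<Rightarrow> bool" where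
  "solid_vector_space conv le \<longleftrightarrow>
     vs_conv conv \<and> vector_ordering conv le \<and> solid_cone conv (pos_cone le)"

definition sv_less ::
  "((nat \<Rightarrow> 'y::real_vector) \<Rightarrow> 'y \<Rightarrow> bool) \<Rightarrow> ('y \<Rightarrow> 'y \<Rightarrow> bool) \<Rightarrow> 'y \<Rightarrow> 'y \<Rightarrow> bool" where
  "sv_less conv le x y \<longleftrightarrow> y - x \<in> vs_interior conv (pos_cone le)"

definition semimonotone_norm :: "('y::real_vector \<Rightarrow> 'y \<Rightarrow> bool) \<Rightarrow> ('y \<Rightarrow> real) \<Rightarrow> bool" where
  "semimonotone_norm le nrm \<longleftrightarrow>
     (\<forall>x. nrm x \<ge> 0) \<and> (\<forall>x. nrm x = 0 \<longleftrightarrow> x = 0) \<and>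
     (\<forall>(c::real) x. nrm (c *\<^sub>R x) = \<bar>c\<bar> * nrm x) \<and>
     (\<forall>x y. nrm (x + y) \<le> nrm x + nrm y) \<and>
     (\<exists>C>0. \<forall>x y. le 0 x \<and> le x y \<longrightarrow> nrm x \<le> C * nrm y)"

section \<open>Cone metric spaces (X is the whole type 'x)\<close>

definition cone_metric ::
  "('y::real_vector \<Rightarrow> 'y \<Rightarrow> bool) \<Rightarrow> ('x \<Rightarrow> 'x \<Rightarrow> 'y) \<Rightarrow> bool" where
  "cone_metric le d \<longleftrightarrow>
     (\<forall>x y. le 0 (d x y)) \<and> (\<forall>x y. d x y = 0 \<longleftrightarrow> x = y) \<and>
     (\<forall>x y. d x y = d y x) \<and> (\<forall>x y z. le (d x y) (d x z + d z y))"

definition cm_ball ::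
  "((nat \<Rightarrow> 'y::real_vector) \<Rightarrow> 'y \<Rightarrow> bool) \<Rightarrow> ('y \<Rightarrow> 'y \<Rightarrow> bool) \<Rightarrow> ('x \<Rightarrow> 'x \<Rightarrow> 'y)
     \<Rightarrow> 'x \<Rightarrow> 'y \<Rightarrow> 'x set" where
  "cm_ball conv le d x r = {y. sv_less conv le (d y x) r}"

definition cm_open ::
  "((nat \<Rightarrow> 'y::real_vector) \<Rightarrow> 'y \<Rightarrow> bool) \<Rightarrow> ('y \<Rightarrow> 'y \<Rightarrow> bool) \<Rightarrow> ('x \<Rightarrow> 'x \<Rightarrow> 'y)
     \<Rightarrow> 'x set \<Rightarrow> bool" where
  "cm_open conv le d S \<longleftrightarrow>
     (\<forall>x\<in>S. \<exists>y r. sv_less conv le 0 r \<and> x \<in> cm_ball conv le d y r \<and> cm_ball conv le d y r \<subseteq> S)"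

definition cm_conv ::
  "((nat \<Rightarrow> 'y::real_vector) \<Rightarrow> 'y \<Rightarrow> bool) \<Rightarrow> ('y \<Rightarrow> 'y \<Rightarrow> bool) \<Rightarrow> ('x \<Rightarrow> 'x \<Rightarrow> 'y)
     \<Rightarrow> (nat \<Rightarrow> 'x) \<Rightarrow> 'x \<Rightarrow> bool" where
  "cm_conv conv le d xs x \<longleftrightarrow>
     (\<forall>c. sv_less conv le 0 c \<longrightarrow> (\<forall>\<^sub>F n in sequentially. sv_less conv le (d (xs n) x) c))"

definition cm_continuous_at_within ::
  "((nat \<Rightarrow> 'y::real_vector) \<Rightarrow> 'y \<Rightarrow> bool) \<Rightarrow> ('y \<Rightarrow> 'y \<Rightarrow> bool) \<Rightarrow> ('x \<Rightarrow> 'x \<Rightarrow> 'y)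
     \<Rightarrow> 'x set \<Rightarrow> ('x \<Rightarrow> 'x) \<Rightarrow> 'x \<Rightarrow> bool" where
  "cm_continuous_at_within conv le d D T p \<longleftrightarrow>
     (\<forall>V. cm_open conv le d V \<and> T p \<in> V \<longrightarrow>
        (\<exists>U. cm_open conv le d U \<and> p \<in> U \<and> (\<forall>x\<in>U \<inter> D. T x \<in> V)))"

text \<open>Closed graph: {(x, T x) | x \<in> D} is closed in D \<times> X with the product of the
  subspace topology on D and the topology of X.\<close>
definition cm_closed_graph ::
  "((nat \<Rightarrow> 'y::real_vector) \<Rightarrow> 'y \<Rightarrow> bool) \<Rightarrow> ('y \<Rightarrow> 'y \<Rightarrow> bool) \<Rightarrow> ('x \<Rightarrow> 'x \<Rightarrow> 'y)
     \<Rightarrow> 'x set \<Rightarrow> ('x \<Rightarrow> 'x) \<Rightarrow> bool" where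
  "cm_closed_graph conv le d D T \<longleftrightarrow>
     (\<forall>x\<in>D. \<forall>y. y \<noteq> T x \<longrightarrow>
        (\<exists>U V. cm_open conv le d U \<and> cm_open conv le d V \<and> x \<in> U \<and> y \<in> V \<and>
               (\<forall>z\<in>U \<inter> D. T z \<notin> V)))"

definition cm_lsc_at_within ::
  "((nat \<Rightarrow> 'y::real_vector) \<Rightarrow> 'y \<Rightarrow> bool) \<Rightarrow> ('y \<Rightarrow> 'y \<Rightarrow> bool) \<Rightarrow> ('x \<Rightarrow> 'x \<Rightarrow> 'y)
     \<Rightarrow> 'x set \<Rightarrow> ('x \<Rightarrow> real) \<Rightarrow> 'x \<Rightarrow> bool" where
  "cm_lsc_at_within conv le d D G p \<longleftrightarrow>
     (\<forall>e>0. \<exists>U. cm_open conv le d U \<and> p \<in> U \<and> (\<forall>x\<in>U \<inter> D. G p - e < G x))"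

end

theory Submission
  imports Defs
begin

text \<open>Along the Picard sequence both \<open>x\<^sub>n \<rightarrow> \<xi>\<close> and \<open>T x\<^sub>n = x\<^sub>n\<^sub>+\<^sub>1 \<rightarrow> \<xi>\<close>.
  Under (F1) also \<open>T x\<^sub>n \<rightarrow> T \<xi>\<close>, and limits are unique; under (F2) the graph, being closed,
  contains the limit \<open>(\<xi>, \<xi>)\<close> of \<open>(x\<^sub>n, T x\<^sub>n)\<close>; under (F3) lower semicontinuity bounds
  \<open>\<parallel>d(\<xi>, T \<xi>)\<parallel>\<close> by \<open>\<parallel>d(x\<^sub>n, x\<^sub>n\<^sub>+\<^sub>1)\<parallel>\<close>, which becomes arbitrarily small; under (F4)
  \<open>d(\<xi>, T \<xi>)\<close> lies below every interior point of the cone and hence vanishes.\<close>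

lemma vs_open_vs_interior: "vs_open conv (vs_interior conv A)"
  unfolding vs_open_def
proof (intro allI impI)
  fix xs x assume "conv xs x \<and> x \<in> vs_interior conv A"
  then obtain B where B: "B \<subseteq> A" "vs_open conv B" "x \<in> B" "conv xs x"
    by (auto simp: vs_interior_def)
  then have "\<forall>\<^sub>F n in sequentially. xs n \<in> B" by (auto simp: vs_open_def)
  then show "\<forall>\<^sub>F n in sequentially. xs n \<in> vs_interior conv A"
    by (rule eventually_mono) (use B in \<open>auto simp: vs_interior_def\<close>)
qed

lemma vs_interior_maximal: "B \<subseteq> A \<Longrightarrow> vs_open conv B \<Longrightarrow> B \<subseteq> vs_interior conv A"
  by (auto simp: vs_interior_def)

lemma vs_interior_subset: "vs_interior conv A \<subseteq> A"
  by (auto simp: vs_interior_def)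

lemma vs_interior_image_subset:
  assumes conv_g: "\<And>xs x. conv xs x \<Longrightarrow> conv (\<lambda>n. g (xs n)) (g x)"
    and f_g: "\<And>y. f (g y) = y" and g_f: "\<And>u. g (f u) = u" and fA: "f ` A \<subseteq> A"
  shows "f ` vs_interior conv A \<subseteq> vs_interior conv A"
proof (rule vs_interior_maximal)
  show "f ` vs_interior conv A \<subseteq> A"
    using image_mono[OF vs_interior_subset] fA by (rule order_trans)
  show "vs_open conv (f ` vs_interior conv A)"
    unfolding vs_open_def
  proof (intro allI impI)
    fix xs x assume "conv xs x \<and> x \<in> f ` vs_interior conv A"
    then obtain u where u: "u \<in> vs_interior conv A" "x = f u" and "conv xs x" by blast
    from \<open>conv xs x\<close> have "conv (\<lambda>n. g (xs n)) (g x)" by (rule conv_g)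
    then have "conv (\<lambda>n. g (xs n)) u" using u(2) g_f by simp
    then have "\<forall>\<^sub>F n in sequentially. g (xs n) \<in> vs_interior conv A"
      using vs_open_vs_interior[of conv A] u(1) unfolding vs_open_def by blast
    then show "\<forall>\<^sub>F n in sequentially. xs n \<in> f ` vs_interior conv A"
      by (rule eventually_mono) (metis f_g imageI)
  qed
qed

lemma semimonotone_normD:
  assumes "semimonotone_norm le nrm"
  shows "nrm x \<ge> 0" and "nrm x = 0 \<longleftrightarrow> x = 0" and "nrm (c *\<^sub>R x) = \<bar>c\<bar> * nrm x"
    and "\<exists>C>0. \<forall>x y. le 0 x \<and> le x y \<longrightarrow> nrm x \<le> C * nrm y"
  using assms unfolding semimonotone_norm_def by metis+

locale solid_space =
  fixes conv :: "(nat \<Rightarrow> 'y::real_vector) \<Rightarrow> 'y \<Rightarrow> bool"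
    and le :: "'y \<Rightarrow> 'y \<Rightarrow> bool"
  assumes solid: "solid_vector_space conv le"
begin

abbreviation interior_cone :: "'y set" where
  "interior_cone \<equiv> vs_interior conv (pos_cone le)"

lemma conv_add: "conv xs x \<Longrightarrow> conv ys y \<Longrightarrow> conv (\<lambda>n. xs n + ys n) (x + y)"
  and conv_scaleR: "conv xs x \<Longrightarrow> conv (\<lambda>n. c *\<^sub>R xs n) (c *\<^sub>R x)"
  and conv_scaleR_left: "ls \<longlonglongrightarrow> l \<Longrightarrow> conv (\<lambda>n. ls n *\<^sub>R x) (l *\<^sub>R x)"
  using solid unfolding solid_vector_space_def vs_conv_def by blast+

lemma conv_const: "conv (\<lambda>n. x) x"
  using conv_scaleR_left[of "\<lambda>n. 1" 1 x] by simp

lemma le_trans [trans]: "le x y \<Longrightarrow> le y z \<Longrightarrow> le x z"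
  and le_antisym: "le x y \<Longrightarrow> le y x \<Longrightarrow> x = y"
  and add_right_le: "le x y \<Longrightarrow> le (x + z) (y + z)"
  and scaleR_le: "c \<ge> 0 \<Longrightarrow> le x y \<Longrightarrow> le (c *\<^sub>R x) (c *\<^sub>R y)"
  and le_limit: "conv xs x \<Longrightarrow> conv ys y \<Longrightarrow> (\<And>n. le (xs n) (ys n)) \<Longrightarrow> le x y"
  using solid unfolding solid_vector_space_def vector_ordering_def by blast+

lemma interior_cone_nonempty: "\<exists>c. c \<in> interior_cone"
  using solid unfolding solid_vector_space_def solid_cone_def by blast

lemma interior_cone_nonneg: "c \<in> interior_cone \<Longrightarrow> le 0 c"
  using vs_interior_subset[of conv "pos_cone le"] by (auto simp: pos_cone_def)

lemma le_iff_diff_nonneg: "le x y \<longleftrightarrow> le 0 (y - x)"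
  using add_right_le[of x y "- x"] add_right_le[of 0 "y - x" x] by auto

lemma add_le_add:
  assumes "le a b" and "le c e"
  shows "le (a + c) (b + e)"
proof -
  have "le (a + c) (b + c)" using add_right_le[OF assms(1)] .
  moreover have "le (b + c) (b + e)"
    using add_right_le[OF assms(2), of b] by (simp add: add.commute)
  ultimately show ?thesis by (rule le_trans)
qed

lemma scaleR_left_le:
  assumes "s \<le> t" and "le 0 x"
  shows "le (s *\<^sub>R x) (t *\<^sub>R x)"
proof -
  have "le 0 ((t - s) *\<^sub>R x)" using scaleR_le[OF _ assms(2), of "t - s"] assms(1) by simp
  then show ?thesis by (simp add: le_iff_diff_nonneg[of "s *\<^sub>R x" "t *\<^sub>R x"] scaleR_diff_left)
qed

lemma scaleR_interior_cone:
  assumes c: "c \<in> interior_cone" and t: "t > 0"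
  shows "t *\<^sub>R c \<in> interior_cone"
proof -
  have "(\<lambda>y. t *\<^sub>R y) ` interior_cone \<subseteq> interior_cone"
  proof (rule vs_interior_image_subset[where g = "\<lambda>y. (1 / t) *\<^sub>R y"])
    show "conv (\<lambda>n. (1 / t) *\<^sub>R xs n) ((1 / t) *\<^sub>R x)" if "conv xs x" for xs x
      using conv_scaleR[OF that] .
    show "(\<lambda>y. t *\<^sub>R y) ` pos_cone le \<subseteq> pos_cone le"
      using scaleR_le[of t 0] t by (auto simp: pos_cone_def)
  qed (use t in simp_all)
  then show ?thesis using c by blast
qed

lemma add_interior_cone:
  assumes c: "c \<in> interior_cone" and k: "le 0 k"
  shows "c + k \<in> interior_cone"
proof -
  have "(\<lambda>y. y + k) ` interior_cone \<subseteq> interior_cone"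
  proof (rule vs_interior_image_subset[where g = "\<lambda>y. y - k"])
    show "conv (\<lambda>n. xs n - k) (x - k)" if "conv xs x" for xs x
      using conv_add[OF that conv_const, of "- k"] by simp
    show "(\<lambda>y. y + k) ` pos_cone le \<subseteq> pos_cone le"
      using add_le_add[OF _ k, of 0] by (auto simp: pos_cone_def)
  qed simp_all
  then show ?thesis using c by blast
qed

lemma less_imp_le: "sv_less conv le x y \<Longrightarrow> le x y"
  using interior_cone_nonneg[of "y - x"] le_iff_diff_nonneg[of x y] by (simp add: sv_less_def)

lemma le_less_trans:
  assumes "le x y" and "sv_less conv le y z"
  shows "sv_less conv le x z"
proof -
  have "z - y + (y - x) \<in> interior_cone"
    using add_interior_cone[of "z - y" "y - x"] assms le_iff_diff_nonneg[of x y]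
    unfolding sv_less_def by blast
  moreover have "z - y + (y - x) = z - x" by simp
  ultimately show ?thesis by (simp add: sv_less_def)
qed

text \<open>The cone is Archimedean: a vector dominated by every interior point is dominated by
  the null sequence \<open>c /\<^sub>R Suc n\<close>, hence by its limit 0.\<close>

lemma eq_0_if_le_interior_cone:
  assumes "le 0 a" and "\<And>c. c \<in> interior_cone \<Longrightarrow> le a c"
  shows "a = 0"
proof -
  obtain c where c: "c \<in> interior_cone" using interior_cone_nonempty by blast
  have "conv (\<lambda>n. inverse (real (Suc n)) *\<^sub>R c) 0"
    using conv_scaleR_left[OF LIMSEQ_inverse_real_of_nat, of c] by simp
  moreover have "le a (inverse (real (Suc n)) *\<^sub>R c)" for n
    by (intro assms(2) scaleR_interior_cone[OF c]) simp
  ultimately have "le a 0" by (rule le_limit[OF conv_const])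
  then show ?thesis using le_antisym assms(1) by blast
qed

end

locale cone_metric_space = solid_space conv le
  for conv :: "(nat \<Rightarrow> 'y::real_vector) \<Rightarrow> 'y \<Rightarrow> bool" and le +
  fixes d :: "'x \<Rightarrow> 'x \<Rightarrow> 'y"
  assumes cone_metric: "cone_metric le d"
begin

lemma d_nonneg: "le 0 (d x y)"
  and d_eq_0_iff: "d x y = 0 \<longleftrightarrow> x = y"
  and d_commute: "d x y = d y x"
  using cone_metric unfolding cone_metric_def by simp_all

lemma d_triangle: "le (d x y) (d x z + d z y)"
  using cone_metric unfolding cone_metric_def by blast

lemma eq_if_d_le_interior_cone:
  assumes "\<And>c. c \<in> interior_cone \<Longrightarrow> le (d x y) c"
  shows "x = y"
  using eq_0_if_le_interior_cone[OF d_nonneg assms] d_eq_0_iff by blast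

lemma cm_open_cm_ball: "sv_less conv le 0 r \<Longrightarrow> cm_open conv le d (cm_ball conv le d x r)"
  unfolding cm_open_def by blast

lemma centre_in_cm_ball: "sv_less conv le 0 r \<Longrightarrow> x \<in> cm_ball conv le d x r"
  using d_eq_0_iff[of x x] by (simp add: cm_ball_def)

lemma cm_conv_eventually_le:
  assumes "cm_conv conv le d xs p" and "c \<in> interior_cone"
  shows "\<forall>\<^sub>F n in sequentially. le (d (xs n) p) c"
proof -
  have "\<forall>\<^sub>F n in sequentially. sv_less conv le (d (xs n) p) c"
    using assms unfolding cm_conv_def sv_less_def by simp
  then show ?thesis by (rule eventually_mono) (rule less_imp_le)
qed

lemma cm_conv_Suc:
  assumes "cm_conv conv le d xs p"
  shows "cm_conv conv le d (\<lambda>n. xs (Suc n)) p"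
  unfolding cm_conv_def
proof (intro allI impI)
  fix c assume "sv_less conv le 0 c"
  then have "\<forall>\<^sub>F n in sequentially. sv_less conv le (d (xs n) p) c"
    using assms unfolding cm_conv_def by blast
  then show "\<forall>\<^sub>F n in sequentially. sv_less conv le (d (xs (Suc n)) p) c"
    using eventually_sequentially_Suc[of "\<lambda>n. sv_less conv le (d (xs n) p) c"] by simp
qed

text \<open>If \<open>p \<in> U(y, r)\<close> then \<open>U(p, r - d(p, y)) \<subseteq> U(y, r)\<close> by the triangle inequality.\<close>

lemma cm_conv_eventually_in_open:
  assumes conv: "cm_conv conv le d xs p" and U: "cm_open conv le d U" "p \<in> U"
  shows "\<forall>\<^sub>F n in sequentially. xs n \<in> U"
proof -
  obtain y r where r: "p \<in> cm_ball conv le d y r" "cm_ball conv le d y r \<subseteq> U"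
    using U unfolding cm_open_def by blast
  then have "sv_less conv le 0 (r - d p y)" by (simp add: cm_ball_def sv_less_def)
  then have "\<forall>\<^sub>F n in sequentially. sv_less conv le (d (xs n) p) (r - d p y)"
    using conv unfolding cm_conv_def by blast
  then show ?thesis
  proof (rule eventually_mono)
    fix n assume "sv_less conv le (d (xs n) p) (r - d p y)"
    then have "sv_less conv le (d (xs n) p + d p y) r"
      by (simp add: sv_less_def algebra_simps)
    then have "sv_less conv le (d (xs n) y) r" by (rule le_less_trans[OF d_triangle])
    then show "xs n \<in> U" using r(2) by (auto simp: cm_ball_def)
  qed
qed

lemma cm_conv_unique:
  assumes "cm_conv conv le d xs p" and "cm_conv conv le d xs q"
  shows "p = q"
proof (rule eq_if_d_le_interior_cone)
  fix c assume "c \<in> interior_cone"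
  then have half: "(1/2) *\<^sub>R c \<in> interior_cone" by (rule scaleR_interior_cone) simp
  have "\<forall>\<^sub>F n in sequentially. le (d (xs n) p) ((1/2) *\<^sub>R c) \<and> le (d (xs n) q) ((1/2) *\<^sub>R c)"
    using eventually_conj[OF cm_conv_eventually_le[OF assms(1) half]
        cm_conv_eventually_le[OF assms(2) half]] .
  then obtain n where n: "le (d (xs n) p) ((1/2) *\<^sub>R c)" "le (d (xs n) q) ((1/2) *\<^sub>R c)"
    by (auto simp: eventually_sequentially)
  have "le (d p (xs n) + d (xs n) q) ((1/2) *\<^sub>R c + (1/2) *\<^sub>R c)"
    using add_le_add[OF n] by (simp only: d_commute[of p "xs n"])
  also have "(1/2) *\<^sub>R c + (1/2) *\<^sub>R c = c" by (simp add: scaleR_add_left[symmetric])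
  finally show "le (d p q) c" by (rule le_trans[OF d_triangle])
qed

lemma cm_continuous_at_within_cm_conv:
  assumes cont: "cm_continuous_at_within conv le d D T p"
    and conv: "cm_conv conv le d xs p" and xs: "\<And>n. xs n \<in> D"
  shows "cm_conv conv le d (\<lambda>n. T (xs n)) (T p)"
  unfolding cm_conv_def
proof (intro allI impI)
  fix c assume c: "sv_less conv le 0 c"
  obtain U where U: "cm_open conv le d U" "p \<in> U" "\<forall>z\<in>U \<inter> D. T z \<in> cm_ball conv le d (T p) c"
    using cont cm_open_cm_ball[OF c] centre_in_cm_ball[OF c]
    unfolding cm_continuous_at_within_def by blast
  show "\<forall>\<^sub>F n in sequentially. sv_less conv le (d (T (xs n)) (T p)) c"
    using cm_conv_eventually_in_open[OF conv U(1,2)]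
    by (rule eventually_mono) (use U(3) xs in \<open>auto simp: cm_ball_def\<close>)
qed

lemma cm_closed_graph_limit:
  assumes graph: "cm_closed_graph conv le d D T" and p: "p \<in> D" and xs: "\<And>n. xs n \<in> D"
    and conv: "cm_conv conv le d xs p" and conv_T: "cm_conv conv le d (\<lambda>n. T (xs n)) q"
  shows "T p = q"
proof (rule ccontr)
  assume "T p \<noteq> q"
  then obtain U V where UV: "cm_open conv le d U" "cm_open conv le d V" "p \<in> U" "q \<in> V"
      "\<forall>z\<in>U \<inter> D. T z \<notin> V"
    using graph[unfolded cm_closed_graph_def, rule_format, OF p, of q] by auto
  have "\<forall>\<^sub>F n in sequentially. xs n \<in> U \<and> T (xs n) \<in> V"
    using cm_conv_eventually_in_open[OF conv UV(1,3)]
      cm_conv_eventually_in_open[OF conv_T UV(2,4)]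
    by (rule eventually_conj)
  then obtain n where "xs n \<in> U" "T (xs n) \<in> V" by (auto simp: eventually_sequentially)
  then show False using UV(5) xs by blast
qed

text \<open>For a fixed interior point \<open>c\<close> and small \<open>\<delta> > 0\<close>, eventually
  \<open>d(x\<^sub>n, y\<^sub>n) \<preceq> 2\<delta>c\<close>, and semimonotonicity turns this into a norm bound.\<close>

lemma cm_conv_norm_d_eventually_less:
  assumes nrm: "semimonotone_norm le nrm"
    and xs: "cm_conv conv le d xs p" and ys: "cm_conv conv le d ys p" and e: "e > 0"
  shows "\<forall>\<^sub>F n in sequentially. nrm (d (xs n) (ys n)) < e"
proof -
  obtain C where C: "C > 0" "\<And>x y. le 0 x \<Longrightarrow> le x y \<Longrightarrow> nrm x \<le> C * nrm y"
    using semimonotone_normD(4)[OF nrm] by blast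
  obtain c where c: "c \<in> interior_cone" using interior_cone_nonempty by blast
  define \<delta> where "\<delta> = e / (2 * C * nrm c + 1)"
  have "0 \<le> 2 * C * nrm c" using C(1) semimonotone_normD(1)[OF nrm, of c] by simp
  then have den: "2 * C * nrm c + 1 > 0" by linarith
  then have \<delta>: "\<delta> > 0" using e by (simp add: \<delta>_def)
  have "\<delta> * (2 * C * nrm c + 1) = e" using den by (simp add: \<delta>_def)
  then have "2 * C * \<delta> * nrm c = e - \<delta>" by (simp add: algebra_simps)
  then have small: "2 * C * \<delta> * nrm c < e" using \<delta> by linarith
  have \<delta>c: "\<delta> *\<^sub>R c \<in> interior_cone" using scaleR_interior_cone[OF c \<delta>] .
  have "\<forall>\<^sub>F n in sequentially. le (d (xs n) p) (\<delta> *\<^sub>R c) \<and> le (d (ys n) p) (\<delta> *\<^sub>R c)"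
    using eventually_conj[OF cm_conv_eventually_le[OF xs \<delta>c]
        cm_conv_eventually_le[OF ys \<delta>c]] .
  then show ?thesis
  proof (rule eventually_mono)
    fix n assume "le (d (xs n) p) (\<delta> *\<^sub>R c) \<and> le (d (ys n) p) (\<delta> *\<^sub>R c)"
    then have "le (d (xs n) p + d p (ys n)) (\<delta> *\<^sub>R c + \<delta> *\<^sub>R c)"
      using add_le_add by (simp only: d_commute[of p "ys n"])
    also have "\<delta> *\<^sub>R c + \<delta> *\<^sub>R c = (2 * \<delta>) *\<^sub>R c" by (simp add: scaleR_add_left[symmetric])
    finally have "le (d (xs n) (ys n)) ((2 * \<delta>) *\<^sub>R c)" by (rule le_trans[OF d_triangle])
    then have "nrm (d (xs n) (ys n)) \<le> C * nrm ((2 * \<delta>) *\<^sub>R c)"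
      by (rule C(2)[OF d_nonneg])
    also have "\<dots> = 2 * C * \<delta> * nrm c"
      using semimonotone_normD(3)[OF nrm] \<delta> by (simp add: abs_of_pos mult_ac)
    finally show "nrm (d (xs n) (ys n)) < e" using small by linarith
  qed
qed

lemma fixed_point_if_lsc_norm_d:
  assumes nrm: "semimonotone_norm le nrm"
    and lsc: "cm_lsc_at_within conv le d D (\<lambda>x. nrm (d x (T x))) p"
    and xs: "\<And>n. xs n \<in> D" and conv: "cm_conv conv le d xs p"
    and conv_T: "cm_conv conv le d (\<lambda>n. T (xs n)) p"
  shows "T p = p"
proof (rule ccontr)
  define G where "G = nrm (d p (T p))"
  assume "T p \<noteq> p"
  then have "nrm (d p (T p)) \<noteq> 0" using semimonotone_normD(2)[OF nrm] d_eq_0_iff by auto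
  then have "G > 0"
    using semimonotone_normD(1)[OF nrm, of "d p (T p)"] by (simp add: G_def order_less_le)
  then have G: "G / 2 > 0" by simp
  then obtain U where U: "cm_open conv le d U" "p \<in> U"
      "\<forall>x\<in>U \<inter> D. G - G / 2 < nrm (d x (T x))"
    using lsc unfolding cm_lsc_at_within_def G_def by blast
  have "\<forall>\<^sub>F n in sequentially. xs n \<in> U \<and> nrm (d (xs n) (T (xs n))) < G / 2"
    using eventually_conj[OF cm_conv_eventually_in_open[OF conv U(1,2)]
        cm_conv_norm_d_eventually_less[OF nrm conv conv_T G]] .
  then obtain n where n: "xs n \<in> U" "nrm (d (xs n) (T (xs n))) < G / 2"
    by (auto simp: eventually_sequentially)
  have "G - G / 2 < nrm (d (xs n) (T (xs n)))" using U(3) n(1) xs by blast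
  with n(2) show False by linarith
qed

lemma fixed_point_if_d_le_combination:
  assumes ab: "\<alpha> \<ge> 0" "\<beta> \<ge> 0"
    and bound: "\<forall>x\<in>D. le (d p (T p)) (\<alpha> *\<^sub>R d x p + \<beta> *\<^sub>R d (T x) p)"
    and xs: "\<And>n. xs n \<in> D" and conv: "cm_conv conv le d xs p"
    and conv_T: "cm_conv conv le d (\<lambda>n. T (xs n)) p"
  shows "T p = p"
proof (rule sym, rule eq_if_d_le_interior_cone)
  fix c assume c: "c \<in> interior_cone"
  define c' where "c' = (1 / (\<alpha> + \<beta> + 1)) *\<^sub>R c"
  have sum_pos: "\<alpha> + \<beta> + 1 > 0" using ab by linarith
  have c': "c' \<in> interior_cone"
    unfolding c'_def by (rule scaleR_interior_cone[OF c]) (use sum_pos in simp)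
  have "\<forall>\<^sub>F n in sequentially. le (d (xs n) p) c' \<and> le (d (T (xs n)) p) c'"
    using eventually_conj[OF cm_conv_eventually_le[OF conv c']
        cm_conv_eventually_le[OF conv_T c']] .
  then obtain n where n: "le (d (xs n) p) c'" "le (d (T (xs n)) p) c'"
    by (auto simp: eventually_sequentially)
  have "le (d p (T p)) (\<alpha> *\<^sub>R d (xs n) p + \<beta> *\<^sub>R d (T (xs n)) p)" using bound xs by blast
  also have "le \<dots> ((\<alpha> + \<beta>) *\<^sub>R c')"
    using add_le_add[OF scaleR_le[OF ab(1) n(1)] scaleR_le[OF ab(2) n(2)]]
    by (simp add: scaleR_add_left)
  also have "le \<dots> ((\<alpha> + \<beta> + 1) *\<^sub>R c')"
    by (rule scaleR_left_le[OF _ interior_cone_nonneg[OF c']]) simp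
  also have "(\<alpha> + \<beta> + 1) *\<^sub>R c' = c" using sum_pos by (simp add: c'_def)
  finally show "le (d p (T p)) c" .
qed

end

theorem proposition10p1:
  fixes conv :: "(nat \<Rightarrow> 'y::real_vector) \<Rightarrow> 'y \<Rightarrow> bool"
    and le :: "'y \<Rightarrow> 'y \<Rightarrow> bool"
    and d :: "'x \<Rightarrow> 'x \<Rightarrow> 'y"
    and D :: "'x set" and T :: "'x \<Rightarrow> 'x" and x0 \<xi> :: 'x
  assumes "solid_vector_space conv le"
    and "cone_metric le d"
    and "x0 \<in> D"
    and "\<forall>n. (T ^^ n) x0 \<in> D"
    and "cm_conv conv le d (\<lambda>n. (T ^^ n) x0) \<xi>"
    and "\<xi> \<in> D"
  shows "(cm_continuous_at_within conv le d D T \<xi> \<longrightarrow> T \<xi> = \<xi>) \<and>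
         (cm_closed_graph conv le d D T \<longrightarrow> T \<xi> = \<xi>) \<and>
         ((\<exists>nrm. semimonotone_norm le nrm \<and>
             cm_lsc_at_within conv le d D (\<lambda>x. nrm (d x (T x))) \<xi>) \<longrightarrow> T \<xi> = \<xi>) \<and>
         ((\<exists>\<alpha> \<beta>::real. \<alpha> \<ge> 0 \<and> \<beta> \<ge> 0 \<and>
             (\<forall>x\<in>D. le (d \<xi> (T \<xi>)) (\<alpha> *\<^sub>R d x \<xi> + \<beta> *\<^sub>R d (T x) \<xi>))) \<longrightarrow> T \<xi> = \<xi>)"
proof -
  interpret cone_metric_space conv le d
    using assms(1,2) by unfold_locales
  define x where "x n = (T ^^ n) x0" for n
  have xD: "x n \<in> D" for n using assms(4) by (simp add: x_def)
  have conv: "cm_conv conv le d x \<xi>" using assms(5) by (simp add: x_def[abs_def])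
  have conv_T: "cm_conv conv le d (\<lambda>n. T (x n)) \<xi>"
    using cm_conv_Suc[OF conv] by (simp add: x_def)
  show ?thesis
  proof (intro conjI impI)
    show "T \<xi> = \<xi>" if "cm_continuous_at_within conv le d D T \<xi>"
      using cm_conv_unique[OF cm_continuous_at_within_cm_conv[OF that conv xD] conv_T] .
    show "T \<xi> = \<xi>" if "cm_closed_graph conv le d D T"
      using cm_closed_graph_limit[OF that assms(6) xD conv conv_T] .
    show "T \<xi> = \<xi>" if "\<exists>nrm. semimonotone_norm le nrm \<and>
        cm_lsc_at_within conv le d D (\<lambda>x. nrm (d x (T x))) \<xi>"
      using that fixed_point_if_lsc_norm_d[OF _ _ xD conv conv_T] by blast
    show "T \<xi> = \<xi>" if "\<exists>\<alpha> \<beta>::real. \<alpha> \<ge> 0 \<and> \<beta> \<ge> 0 \<and>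
        (\<forall>x\<in>D. le (d \<xi> (T \<xi>)) (\<alpha> *\<^sub>R d x \<xi> + \<beta> *\<^sub>R d (T x) \<xi>))"
      using that fixed_point_if_d_le_combination[OF _ _ _ xD conv conv_T] by blast
  qed
qed

end
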